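(* Let $\mathfrak{g}$ be a real Lie algebra with a complex structure $J$ and a $J$-compatible inner product $g$, and let $c\in\Lambda^3\mathfrak{g}^*$ be defined by $$c(X,Y,Z)=-g([JX,JY],Z)-g([JY,JZ],X)-g([JZ,JX],Y).$$ Let $\xi$ be the center of $\mathfrak{g}$ and $X\in\xi$. Then for every $Y\in\mathfrak{g}$, $$dc(X,Y,JX,JY)=2\Big(\|[Y,JX]\|^2-g([[JX,Y],JX],Y)-g([[Y,JY],JX],X)\Big).$$
   Context: A complex structure on $\mathfrak{g}$ is $J$ with $J^2=-\mathrm{Id}$ and $[X,Y]-[JX,JY]+J[JX,Y]+J[X,JY]=0$. $g$ is $J$-compatible if $g(JX,JY)=g(X,Y)$. The form $c$ is the torsion $3$-form of the Bismut connection of $(J,g)$. The differential $d$ is the Chevalley–Eilenberg differential: for $\alpha\in\Lambda^k\mathfrak{g}^*$, $d\alpha(X_0,\dots,X_k)=\sum_{i<j}(-1)^{i+j}\alpha([X_i,X_j],X_0,\dots,\hat X_i,\dots,\hat X_j,\dots,X_k)$. $\|\cdot\|$ is the norm induced by $g$. *)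

theory Defs
  imports "HOL-Analysis.Analysis"
begin

definition lie_algebra :: "('a::real_vector \<Rightarrow> 'a \<Rightarrow> 'a) \<Rightarrow> bool" where
  "lie_algebra br \<longleftrightarrow> bilinear br \<and> (\<forall>x. br x x = 0) \<and>
     (\<forall>x y z. br x (br y z) + br y (br z x) + br z (br x y) = 0)"

definition complex_structure :: "('a::real_vector \<Rightarrow> 'a \<Rightarrow> 'a) \<Rightarrow> ('a \<Rightarrow> 'a) \<Rightarrow> bool" where
  "complex_structure br J \<longleftrightarrow> linear J \<and> (\<forall>x. J (J x) = - x) \<and>
     (\<forall>x y. br x y - br (J x) (J y) + J (br (J x) y) + J (br x (J y)) = 0)"

definition inner_product :: "('a::real_vector \<Rightarrow> 'a \<Rightarrow> real) \<Rightarrow> bool" where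
  "inner_product g \<longleftrightarrow> bilinear g \<and> (\<forall>x y. g x y = g y x) \<and> (\<forall>x. x \<noteq> 0 \<longrightarrow> g x x > 0)"

definition J_compatible :: "('a \<Rightarrow> 'a \<Rightarrow> real) \<Rightarrow> ('a \<Rightarrow> 'a) \<Rightarrow> bool" where
  "J_compatible g J \<longleftrightarrow> (\<forall>x y. g (J x) (J y) = g x y)"

definition gnorm :: "('a \<Rightarrow> 'a \<Rightarrow> real) \<Rightarrow> 'a \<Rightarrow> real" where
  "gnorm g x = sqrt (g x x)"

definition lie_center :: "('a::real_vector \<Rightarrow> 'a \<Rightarrow> 'a) \<Rightarrow> 'a set" where
  "lie_center br = {x. \<forall>y. br x y = 0}"

text \<open>k-forms are represented as functions on lists of k vectors. Chevalley--Eilenberg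
  differential: (d alpha)(X_0..X_k) = sum_{i<j} (-1)^(i+j) alpha([X_i,X_j], X_0,..^i..^j..,X_k).\<close>
definition ce_d :: "('a \<Rightarrow> 'a \<Rightarrow> 'a) \<Rightarrow> ('a list \<Rightarrow> real) \<Rightarrow> 'a list \<Rightarrow> real" where
  "ce_d br \<alpha> xs = (\<Sum>j<length xs. \<Sum>i<j. (-1) ^ (i + j) *
      \<alpha> (br (xs ! i) (xs ! j) # map (nth xs) (filter (\<lambda>k. k \<noteq> i \<and> k \<noteq> j) [0..<length xs])))"

definition c_form :: "('a \<Rightarrow> 'a \<Rightarrow> 'a) \<Rightarrow> ('a \<Rightarrow> 'a) \<Rightarrow> ('a \<Rightarrow> 'a \<Rightarrow> real) \<Rightarrow> 'a list \<Rightarrow> real" where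
  "c_form br J g xs = (let X = xs ! 0; Y = xs ! 1; Z = xs ! 2 in
      - g (br (J X) (J Y)) Z - g (br (J Y) (J Z)) X - g (br (J Z) (J X)) Y)"

end

theory Submission
  imports Defs
begin

text \<open>For central \<open>X\<close> only three of the six terms of \<open>dc(X, Y, JX, JY)\<close> survive, all
  evaluating \<open>c\<close> on brackets with \<open>JX\<close> or \<open>JY\<close>. The vanishing Nijenhuis tensor gives
  \<open>[JX, JW] = J[JX, W]\<close>, so \<open>[JX, JY] = -J[Y, JX]\<close>; \<open>J\<close>-compatibility of \<open>g\<close> then matches the
  terms pairwise, and the Jacobi identity for \<open>Y, JX, JY\<close> rewrites the remaining bracket
  \<open>[[Y, JY], JX]\<close>.\<close>

lemma ce_d_four:
  "ce_d br \<alpha> [a, b, c, d] =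
     - \<alpha> [br a b, c, d] + \<alpha> [br a c, b, d] - \<alpha> [br a d, b, c]
     - \<alpha> [br b c, a, d] + \<alpha> [br b d, a, c] - \<alpha> [br c d, a, b]"
  unfolding ce_d_def by (simp add: lessThan_Suc upt_rec numeral_eq_Suc)

lemma lie_algebra_anticomm:
  assumes "lie_algebra br"
  shows "br b a = - br a b"
proof -
  have bil: "bilinear br" and alt: "\<And>x. br x x = 0"
    using assms unfolding lie_algebra_def by auto
  have "0 = br (a + b) (a + b)" by (rule alt [symmetric])
  also have "\<dots> = br a a + br a b + br b a + br b b"
    using bil by (simp add: bilinear_ladd bilinear_radd)
  finally show ?thesis by (simp add: alt eq_neg_iff_add_eq_0 add.commute)
qed

lemma lie_center_bracket_right:
  assumes "lie_algebra br" and "X \<in> lie_center br"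
  shows "br Y X = 0"
  using assms lie_algebra_anticomm [OF assms(1), of X Y] by (simp add: lie_center_def)

lemma complex_structure_center_bracket:
  assumes "complex_structure br J" and "X \<in> lie_center br"
  shows "br (J X) (J W) = J (br (J X) W)"
proof -
  have "linear J" and "br X W - br (J X) (J W) + J (br (J X) W) + J (br X (J W)) = 0"
    using assms(1) unfolding complex_structure_def by auto
  with assms(2) show ?thesis by (simp add: lie_center_def linear_0)
qed

lemma gnorm_power2:
  assumes "inner_product g"
  shows "(gnorm g x)\<^sup>2 = g x x"
proof -
  have "g x x \<ge> 0"
    using assms unfolding inner_product_def
    by (cases "x = 0") (auto simp: bilinear_lzero less_imp_le)
  then show ?thesis by (simp add: gnorm_def)
qed

locale hermitian_lie_algebra =
  fixes br :: "'a::real_vector \<Rightarrow> 'a \<Rightarrow> 'a" and J :: "'a \<Rightarrow> 'a" and g :: "'a \<Rightarrow> 'a \<Rightarrow> real"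
  assumes lie: "lie_algebra br"
    and complex: "complex_structure br J"
    and inner: "inner_product g"
    and compatible: "J_compatible g J"
begin

lemma bracket_simps [simp]:
  "br 0 y = 0" "br y 0 = 0" "br (- a) b = - br a b" "br a (- b) = - br a b"
  using lie unfolding lie_algebra_def
  by (auto simp: bilinear_lzero bilinear_rzero bilinear_lneg bilinear_rneg)

lemma g_simps [simp]:
  "g 0 y = 0" "g y 0 = 0" "g (- a) b = - g a b" "g a (- b) = - g a b" "g (J a) (J b) = g a b"
  using inner compatible unfolding inner_product_def J_compatible_def
  by (auto simp: bilinear_lzero bilinear_rzero bilinear_lneg bilinear_rneg)

lemma J_simps [simp]: "J 0 = 0" "J (- x) = - J x" "J (J x) = - x"
  using complex unfolding complex_structure_def by (auto simp: linear_0 linear_neg)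

lemma g_diff_left: "g (a - b) c = g a c - g b c"
proof -
  have "bilinear g" using inner unfolding inner_product_def by blast
  then show ?thesis by (rule bilinear_lsub)
qed

lemma bracket_J_center_left:
  assumes "X \<in> lie_center br"
  shows "br (J W) (J X) = J (br W (J X))"
proof -
  have "br (J W) (J X) = - J (br (J X) W)"
    using complex_structure_center_bracket [OF complex assms, of W]
      lie_algebra_anticomm [OF lie, of "J W" "J X"] by simp
  also have "\<dots> = J (br W (J X))"
    using lie_algebra_anticomm [OF lie, of W "J X"] by simp
  finally show ?thesis .
qed

lemma jacobi_center_step:
  assumes "X \<in> lie_center br"
  shows "br (br Y (J Y)) (J X) = br Y (J (br Y (J X))) - br (J Y) (br Y (J X))"
proof -
  have "br Y (br (J X) (J Y)) + br (J X) (br (J Y) Y) + br (J Y) (br Y (J X)) = 0"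
    using lie unfolding lie_algebra_def by blast
  moreover have "br (J X) (J Y) = - J (br Y (J X))"
    using complex_structure_center_bracket [OF complex assms, of Y]
      lie_algebra_anticomm [OF lie, of Y "J X"] by simp
  moreover have "br (J X) (br (J Y) Y) = br (br Y (J Y)) (J X)"
    using lie_algebra_anticomm [OF lie, of Y "J Y"]
      lie_algebra_anticomm [OF lie, of "br Y (J Y)" "J X"] by simp
  ultimately show ?thesis by (simp add: algebra_simps)
qed

lemma c_form_zero: "c_form br J g (0 # xs) = 0"
  by (simp add: c_form_def)

lemma ce_d_c_form_center:
  assumes X: "X \<in> lie_center br"
  shows "ce_d br (c_form br J g) [X, Y, J X, J Y] =
    2 * (g (br Y (J X)) (br Y (J X)) - g (br (br (J X) Y) (J X)) Y
         - g (br (br Y (J Y)) (J X)) X)"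
proof -
  define A where "A = br Y (J X)"
  define B where "B = br Y (J Y)"
  have cen [simp]: "br X w = 0" "br w X = 0" for w
    using X lie_center_bracket_right [OF lie X] by (auto simp: lie_center_def)
  have JXY: "br (J X) Y = - A"
    unfolding A_def by (rule lie_algebra_anticomm [OF lie])
  have JXJY: "br (J X) (J Y) = - J A"
    using complex_structure_center_bracket [OF complex X, of Y] JXY by simp
  have JA: "br (J A) (J X) = J (br A (J X))" and JB: "br (J B) (J X) = J (br B (J X))"
    by (rule bracket_J_center_left [OF X])+
  have c1: "c_form br J g [A, X, J Y] = - g (br A (J X)) Y - g A A + g (br Y (J A)) X"
    by (simp add: c_form_def JA JXY)
  have c2: "c_form br J g [B, X, J X] = - g (br B (J X)) X"
    by (simp add: c_form_def JB)
  have c3: "c_form br J g [- J A, X, Y] = - g (br A (J X)) Y - g A A - g (br (J Y) A) X"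
    by (simp add: c_form_def JA JXJY)
  have "ce_d br (c_form br J g) [X, Y, J X, J Y] =
      - c_form br J g [A, X, J Y] + c_form br J g [B, X, J X] - c_form br J g [- J A, X, Y]"
    by (simp add: ce_d_four JXJY A_def [symmetric] B_def [symmetric] c_form_zero)
  also have "\<dots> = 2 * (g A A + g (br A (J X)) Y - g (br B (J X)) X)"
    using jacobi_center_step [OF X, of Y]
    by (simp add: c1 c2 c3 A_def [symmetric] B_def [symmetric] g_diff_left)
  finally show ?thesis by (simp add: A_def B_def JXY)
qed

end

theorem lemma3p4:
  fixes br :: "'a::euclidean_space \<Rightarrow> 'a \<Rightarrow> 'a"
    and J :: "'a \<Rightarrow> 'a"
    and g :: "'a \<Rightarrow> 'a \<Rightarrow> real"
    and X Y :: 'a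
  assumes "lie_algebra br"
    and "complex_structure br J"
    and "inner_product g"
    and "J_compatible g J"
    and "X \<in> lie_center br"
  shows "ce_d br (c_form br J g) [X, Y, J X, J Y] =
    2 * ((gnorm g (br Y (J X)))\<^sup>2 - g (br (br (J X) Y) (J X)) Y - g (br (br Y (J Y)) (J X)) X)"
proof -
  interpret hermitian_lie_algebra br J g
    using assms(1-4) by unfold_locales
  show ?thesis
    using ce_d_c_form_center [OF assms(5)] by (simp add: gnorm_power2 [OF assms(3)])
qed

end
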